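(* Assume $\sigma_1(x)=\tfrac12\sigma_1''(0)\,x(x-a_1)$ with $\sigma_1''(0)\ne0$ and real $a_1>0$, and that $\frac{\tau(0)}{\frac12\sigma_1''(0)}=\frac{a_1}{1-q^{-1}}$ and $\frac{\tau'(0)}{\frac12\sigma_1''(0)}\ne-\frac{1}{1-q^{-1}}$, so that $\sigma_2(x)=\tfrac12\sigma_2''(0)x^2$ with $\tfrac12\sigma_2''(0)=q\big[\tfrac12\sigma_1''(0)+(1-q^{-1})\tau'(0)\big]\ne0$. Let $\Lambda_q=q^{-2}\Big[1+\frac{(1-q^{-1})\tau'(0)}{\frac12\sigma_1''(0)}\Big]$ and assume $q^2\Lambda_q<0$. Put $b=a_1$ and $$\rho(x)=|x|^{\alpha}\sqrt{x^{\log_qx-1}}\,(qx/b;q)_\infty,\qquad q^{\alpha}=-\frac{q^{-2}\tfrac12\sigma_2''(0)}{\tfrac12\sigma_1''(0)b}.$$ Then there exist polynomials $P_n$, $n\in\mathbb{N}_0$, with $P_n$ of degree $n$ a solution of the q-EHT with $\lambda=\lambda_n$, and nonzero constants $d_n^2$, such that for all $m,n\in\mathbb{N}_0$ $$\int_0^{b}P_n(x)P_m(x)\rho(x)\,d_qx=d_n^2\delta_{mn},$$ i.e. orthogonality with respect to $\rho$ supported on $\{q^kb\}_{k\in\mathbb{N}_0}$.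
   Context: Throughout $0<q<1$. For a function $y$ and $\zeta\in\{q,q^{-1}\}$, $D_\zeta y(x)=\frac{y(x)-y(\zeta x)}{(1-\zeta)x}$ for $x\ne0$ and $D_\zeta y(0)=y'(0)$; $[n]_q=\frac{1-q^n}{1-q}$. Let $\sigma_1$ be a real polynomial of degree at most two, $\tau(x)=\tau'(0)x+\tau(0)$ a real polynomial with $\tau'(0)\ne0$, and $\sigma_2(x):=q[\sigma_1(x)+(1-q^{-1})x\tau(x)]$. The q-EHT with parameter $n$ is $\sigma_1(x)D_{q^{-1}}D_qy(x)+\tau(x)D_qy(x)+\lambda_ny(x)=0$, $\lambda_n=-[n]_q\big(\tau'(0)+\tfrac12[n-1]_{q^{-1}}\sigma_1''(0)\big)$. $(\beta;q)_\infty=\prod_{k\ge0}(1-\beta q^k)$. For $q^\alpha=c$ ($c\ne0$), $\alpha$ is any complex number with $e^{\alpha\ln q}=c$ and $|x|^\alpha:=e^{\alpha\ln|x|}$; for $x>0$, $\sqrt{x^{\log_qx-1}}:=\exp\big(\tfrac12(\log_qx-1)\ln x\big)$. For $b>0$, $\int_0^b f(x)\,d_qx=(1-q)b\sum_{j\ge0}q^jf(q^jb)$. *)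

theory Defs
  imports "HOL-Analysis.Analysis" "HOL-Computational_Algebra.Polynomial"
begin

definition qD :: "real \<Rightarrow> (real \<Rightarrow> real) \<Rightarrow> real \<Rightarrow> real" where
  "qD \<zeta> y x = (if x = 0 then deriv y 0 else (y x - y (\<zeta> * x)) / ((1 - \<zeta>) * x))"

definition qnum :: "real \<Rightarrow> int \<Rightarrow> real" where
  "qnum z k = (1 - z powi k) / (1 - z)"

definition qpoch_inf :: "real \<Rightarrow> real \<Rightarrow> real" where
  "qpoch_inf \<beta> q = prodinf (\<lambda>k. 1 - \<beta> * q ^ k)"

definition has_qint :: "real \<Rightarrow> (real \<Rightarrow> complex) \<Rightarrow> real \<Rightarrow> complex \<Rightarrow> bool" where
  "has_qint q f b I \<longleftrightarrow>
     (\<lambda>j. complex_of_real ((1 - q) * b * q ^ j) * f (q ^ j * b)) sums I"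

end

theory Submission
  imports Defs
begin

text \<open>
  For \<open>x \<noteq> 0\<close> and \<open>\<tau>(0) = q s a/(q - 1)\<close> the q-EHT reads
  \<open>A (y(q x) - y(x)) + B (1 - a/x) (y(x/q) - y(x)) = \<lambda> y(x)\<close> with
  \<open>A = (q s + (q - 1) t\<^sub>1)/(1 - q)\<^sup>2\<close> and \<open>B = q\<^sup>2 s/(1 - q)\<^sup>2\<close>. This operator is triangular on
  monomials with diagonal entries \<open>\<lambda>\<^sub>j = A (q^j - 1) + B (q^-j - 1)\<close>, which are distinct because the
  hypothesis \<open>q\<^sup>2 \<Lambda>\<^sub>q < 0\<close> says \<open>A B < 0\<close>; hence there is a monic eigenpolynomial of every degree.
  On the lattice \<open>x\<^sub>k = q^k a\<close> the backward term vanishes at \<open>x\<^sub>0 = a\<close>, and the weights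
  \<open>w\<^sub>k = \<Prod>i<k. (-A/B) q^(i+1)/(1 - q^(i+1))\<close> satisfy the Pearson equation
  \<open>w\<^sub>k A = w\<^sub>k\<^sub>+\<^sub>1 B (1 - a/x\<^sub>k\<^sub>+\<^sub>1)\<close>. Summation by parts then makes the operator symmetric
  for \<open>w\<close>, so eigenpolynomials of different degrees are orthogonal. Finally
  \<open>\<rho>(q x) = q^\<alpha> x \<rho>(x)/(1 - q x/b)\<close> reproduces the ratio \<open>w\<^sub>k\<^sub>+\<^sub>1/w\<^sub>k\<close>, so the Jackson integral
  against \<open>\<rho>\<close> is a constant multiple of the \<open>w\<close>-weighted sum over the lattice.
\<close>

section \<open>Second-order difference equations on the naturals\<close>

lemma Bseq_diff:
  fixes f g :: "nat \<Rightarrow> 'a::real_normed_vector"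
  assumes "Bseq f" "Bseq g"
  shows "Bseq (\<lambda>n. f n - g n)"
proof -
  from assms obtain K L where "\<And>n. norm (f n) \<le> K" "\<And>n. norm (g n) \<le> L"
    unfolding Bseq_def by blast
  then have "norm (f n - g n) \<le> K + L" for n
    by (meson add_mono norm_triangle_ineq4 order_trans)
  then show ?thesis by (rule BseqI')
qed

lemma summable_mult_Bseq:
  fixes w u :: "nat \<Rightarrow> real"
  assumes "summable w" "\<And>k. 0 \<le> w k" "Bseq u"
  shows "summable (\<lambda>k. w k * u k)"
proof -
  from \<open>Bseq u\<close> obtain K where "\<And>k. \<bar>u k\<bar> \<le> K"
    unfolding Bseq_def by auto
  then have "norm (w k * u k) \<le> K * w k" for k
    using mult_left_mono[of "\<bar>u k\<bar>" K "w k"] assms(2)[of k]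
    by (simp only: real_norm_def abs_mult abs_of_nonneg mult.commute)
  then show ?thesis
    by (intro summable_comparison_test'[OF summable_mult[OF assms(1)], of 0 _ K]) simp
qed

definition lattice_eigenseq :: "real \<Rightarrow> (nat \<Rightarrow> real) \<Rightarrow> real \<Rightarrow> (nat \<Rightarrow> real) \<Rightarrow> bool" where
  "lattice_eigenseq a b \<mu> f \<longleftrightarrow>
     \<mu> * f 0 = a * (f 1 - f 0) \<and>
     (\<forall>k. \<mu> * f (Suc k) = a * (f (Suc (Suc k)) - f (Suc k)) + b (Suc k) * (f k - f (Suc k)))"

lemma lattice_SL_symmetric:
  fixes w b f g :: "nat \<Rightarrow> real"
  assumes w: "summable w" "\<And>k. 0 \<le> w k" and f: "Bseq f" and g: "Bseq g"
    and pearson: "\<And>k. w k * a = w (Suc k) * b (Suc k)"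
    and eigen: "lattice_eigenseq a b \<mu> f"
  shows "\<mu> * (\<Sum>k. w k * (f k * g k)) =
           - a * (\<Sum>k. w k * ((f (Suc k) - f k) * (g (Suc k) - g k)))"
proof -
  define T where "T k = a * (w k * (g k * (f (Suc k) - f k)))" for k
  define U where "U k = a * (w k * (g (Suc k) * (f k - f (Suc k))))" for k
  define h where "h k = \<mu> * (w k * (f k * g k))" for k
  have fS: "Bseq (\<lambda>k. f (Suc k))" and gS: "Bseq (\<lambda>k. g (Suc k))"
    using f g by (simp_all add: Bseq_Suc_iff)
  note summable_w = summable_mult summable_mult_Bseq[OF w] Bseq_mult Bseq_diff f g fS gS
  have T: "summable T" and U: "summable U" and h: "summable h"
    unfolding T_def U_def h_def by (intro summable_w)+
  from eigen have eq_0: "\<mu> * f 0 = a * (f 1 - f 0)"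
    and eq_Suc: "\<And>k. \<mu> * f (Suc k) = a * (f (Suc (Suc k)) - f (Suc k)) + b (Suc k) * (f k - f (Suc k))"
    unfolding lattice_eigenseq_def by auto
  have "h 0 = w 0 * g 0 * (\<mu> * f 0)"
    unfolding h_def by (simp add: algebra_simps)
  then have h_0: "h 0 = T 0"
    unfolding eq_0 T_def by (simp add: algebra_simps)
  \<comment> \<open>Summation by parts: the Pearson equation moves \<open>b\<^sub>k\<^sub>+\<^sub>1\<close> back to the weight \<open>w\<^sub>k\<close>.\<close>
  have h_Suc: "h (Suc k) = T (Suc k) + U k" for k
  proof -
    have "h (Suc k) = w (Suc k) * g (Suc k) * (\<mu> * f (Suc k))"
      unfolding h_def by simp
    also have "\<dots> = T (Suc k) + g (Suc k) * (w (Suc k) * b (Suc k)) * (f k - f (Suc k))"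
      unfolding eq_Suc T_def by (simp add: algebra_simps)
    also have "\<dots> = T (Suc k) + U k"
      unfolding pearson[symmetric] U_def by (simp add: algebra_simps)
    finally show ?thesis .
  qed
  have "\<mu> * (\<Sum>k. w k * (f k * g k)) = (\<Sum>k. h k)"
    unfolding h_def by (intro suminf_mult[symmetric] summable_w)
  also have "\<dots> = h 0 + (\<Sum>k. T (Suc k) + U k)"
    using suminf_split_head[OF h] h_Suc by simp
  also have "\<dots> = (\<Sum>k. T k) + (\<Sum>k. U k)"
    using suminf_add[OF summable_Suc_iff[THEN iffD2, OF T] U] suminf_split_head[OF T] h_0 by simp
  also have "\<dots> = (\<Sum>k. T k + U k)"
    by (rule suminf_add[OF T U])
  also have "\<dots> = (\<Sum>k. - a * (w k * ((f (Suc k) - f k) * (g (Suc k) - g k))))"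
    unfolding T_def U_def by (simp add: algebra_simps)
  also have "\<dots> = - a * (\<Sum>k. w k * ((f (Suc k) - f k) * (g (Suc k) - g k)))"
    by (intro suminf_mult summable_w)
  finally show ?thesis .
qed

corollary lattice_SL_orthogonal:
  fixes w b f g :: "nat \<Rightarrow> real"
  assumes w: "summable w" "\<And>k. 0 \<le> w k" and f: "Bseq f" and g: "Bseq g"
    and pearson: "\<And>k. w k * a = w (Suc k) * b (Suc k)"
    and "lattice_eigenseq a b \<mu> f" "lattice_eigenseq a b \<nu> g" "\<mu> \<noteq> \<nu>"
  shows "(\<Sum>k. w k * (f k * g k)) = 0"
proof -
  have "\<mu> * (\<Sum>k. w k * (f k * g k)) = \<nu> * (\<Sum>k. w k * (g k * f k))"
    using lattice_SL_symmetric[of w f g a b \<mu>] lattice_SL_symmetric[of w g f a b \<nu>] assms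
    by (simp add: mult.commute)
  then show ?thesis
    using \<open>\<mu> \<noteq> \<nu>\<close> by (simp add: mult.commute)
qed

section \<open>The q-Pochhammer symbol and the weight\<close>

definition lattice_weight :: "real \<Rightarrow> real \<Rightarrow> nat \<Rightarrow> real" where
  "lattice_weight q r k = (\<Prod>i<k. r * q ^ Suc i / (1 - q ^ Suc i))"

lemma lattice_weight_0 [simp]: "lattice_weight q r 0 = 1"
  by (simp add: lattice_weight_def)

lemma lattice_weight_Suc:
  "lattice_weight q r (Suc k) = r * q ^ Suc k / (1 - q ^ Suc k) * lattice_weight q r k"
  by (simp add: lattice_weight_def)

lemma lattice_weight_pos:
  assumes "0 < q" "q < 1" "0 < r"
  shows "0 < lattice_weight q r k"
  unfolding lattice_weight_def
  using assms power_Suc_less_one[OF assms(1,2)] by (intro prod_pos) auto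

lemma summable_lattice_weight:
  fixes q r :: real
  assumes "\<bar>q\<bar> < 1"
  shows "summable (lattice_weight q r)"
proof -
  have "(\<lambda>k. q ^ Suc k) \<longlonglongrightarrow> 0"
    using LIMSEQ_Suc[OF LIMSEQ_power_zero[of q]] assms by simp
  then have "(\<lambda>k. norm (r * q ^ Suc k / (1 - q ^ Suc k))) \<longlonglongrightarrow> norm (r * 0 / (1 - 0))"
    by (intro tendsto_intros) auto
  then have "eventually (\<lambda>k. norm (r * q ^ Suc k / (1 - q ^ Suc k)) < 1/2) sequentially"
    by (rule order_tendstoD) simp
  then obtain N where N: "\<And>k. k \<ge> N \<Longrightarrow> norm (r * q ^ Suc k / (1 - q ^ Suc k)) < 1/2"
    unfolding eventually_sequentially by blast
  show ?thesis
  proof (rule summable_ratio_test[of "1/2" N])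
    fix k assume "k \<ge> N"
    then show "norm (lattice_weight q r (Suc k)) \<le> 1/2 * norm (lattice_weight q r k)"
      unfolding lattice_weight_Suc norm_mult
      using N[of k] by (intro mult_right_mono) auto
  qed simp
qed

lemma convergent_prod_qpoch:
  fixes \<beta> q :: real
  assumes "\<bar>q\<bar> < 1" "\<And>k. \<beta> * q ^ k \<noteq> 1"
  shows "convergent_prod (\<lambda>k. 1 - \<beta> * q ^ k)"
proof -
  have "summable (\<lambda>k. \<bar>\<beta>\<bar> * \<bar>q\<bar> ^ k)"
    using assms(1) by (intro summable_mult summable_geometric) simp
  then have "convergent_prod (\<lambda>k. 1 + - (\<beta> * q ^ k))"
    using assms(2) by (intro summable_imp_convergent_prod_real) (auto simp: abs_mult power_abs)
  then show ?thesis by simp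
qed

lemma qpoch_inf_nonzero:
  fixes \<beta> q :: real
  assumes "\<bar>q\<bar> < 1" "\<And>k. \<beta> * q ^ k \<noteq> 1"
  shows "qpoch_inf \<beta> q \<noteq> 0"
  unfolding qpoch_inf_def using assms
  by (intro prodinf_nonzero convergent_prod_qpoch) auto

lemma qpoch_inf_shift:
  fixes \<beta> q :: real
  assumes "\<bar>q\<bar> < 1" "\<And>k. \<beta> * q ^ k \<noteq> 1"
  shows "qpoch_inf \<beta> q = (1 - \<beta>) * qpoch_inf (\<beta> * q) q"
proof -
  have "1 - \<beta> \<noteq> 0" using assms(2)[of 0] by simp
  moreover have "qpoch_inf (\<beta> * q) q = qpoch_inf \<beta> q / (1 - \<beta>)"
    using prodinf_split_head[OF convergent_prod_qpoch[OF assms]] assms(2)[of 0]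
    by (simp add: qpoch_inf_def mult.assoc)
  ultimately show ?thesis by simp
qed

definition qgauss :: "real \<Rightarrow> real \<Rightarrow> real" where
  "qgauss q x = exp ((log q x - 1) / 2 * ln x)"

lemma qgauss_mult_q:
  assumes "0 < q" "q \<noteq> 1" "0 < x"
  shows "qgauss q (q * x) = x * qgauss q x"
proof -
  have "ln q \<noteq> 0" using assms(1,2) by simp
  then have exponent: "(log q (q * x) - 1) / 2 * ln (q * x) = (log q x - 1) / 2 * ln x + ln x"
    using assms by (simp add: log_def ln_mult field_simps)
  show ?thesis
    unfolding qgauss_def exponent exp_add exp_ln[OF assms(3)] by (rule mult.commute)
qed

definition rho :: "complex \<Rightarrow> real \<Rightarrow> real \<Rightarrow> real \<Rightarrow> complex" where
  "rho \<alpha> q b x = exp (\<alpha> * of_real (ln \<bar>x\<bar>)) * of_real (qgauss q x * qpoch_inf (q * x / b) q)"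

lemma rho_mult_q:
  assumes q: "0 < q" "q < 1" and x: "0 < x" "x \<le> b"
    and \<alpha>: "exp (\<alpha> * of_real (ln q)) = of_real c"
  shows "rho \<alpha> q b (q * x) = of_real (c * x / (1 - q * x / b)) * rho \<alpha> q b x"
proof -
  have power: "exp (\<alpha> * of_real (ln \<bar>q * x\<bar>)) = of_real c * exp (\<alpha> * of_real (ln \<bar>x\<bar>))"
    using q x \<alpha> by (simp add: abs_mult ln_mult distrib_left exp_add)
  have "0 \<le> x / b" "x / b \<le> 1"
    using x by auto
  then have "x / b * q ^ Suc k < 1" for k
  proof -
    have "x / b * q ^ Suc k \<le> q ^ Suc k"
      using \<open>0 \<le> x / b\<close> \<open>x / b \<le> 1\<close> q by (intro mult_left_le_one_le) auto
    also have "\<dots> < 1"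
      using q by (rule power_Suc_less_one)
    finally show ?thesis .
  qed
  then have "q * x / b * q ^ k \<noteq> 1" for k
    by (metis less_irrefl mult.assoc mult.commute power_Suc times_divide_eq_left)
  then have poch: "qpoch_inf (q * x / b) q = (1 - q * x / b) * qpoch_inf (q * (q * x) / b) q"
    using q qpoch_inf_shift[of q "q * x / b"] by (simp add: mult_ac)
  have nonzero: "1 - q * x / b \<noteq> 0"
    using \<open>\<And>k. q * x / b * q ^ k \<noteq> 1\<close>[of 0] by simp
  have "qgauss q (q * x) = x * qgauss q x"
    using q x by (intro qgauss_mult_q) auto
  then have real_part: "c * (qgauss q (q * x) * qpoch_inf (q * (q * x) / b) q)
      = c * x / (1 - q * x / b) * (qgauss q x * qpoch_inf (q * x / b) q)"
    unfolding poch using nonzero by (simp add: field_simps)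
  have "rho \<alpha> q b (q * x)
      = exp (\<alpha> * of_real (ln \<bar>x\<bar>)) * of_real (c * (qgauss q (q * x) * qpoch_inf (q * (q * x) / b) q))"
    unfolding rho_def power by (simp add: mult_ac)
  also have "\<dots> = of_real (c * x / (1 - q * x / b)) * rho \<alpha> q b x"
    unfolding real_part rho_def by (simp add: mult_ac)
  finally show ?thesis .
qed

lemma rho_lattice:
  assumes q: "0 < q" "q < 1" and b: "0 < b"
    and \<alpha>: "exp (\<alpha> * of_real (ln q)) = of_real c"
  shows "of_real ((1 - q) * b * q ^ k) * rho \<alpha> q b (q ^ k * b)
           = of_real ((1 - q) * b) * rho \<alpha> q b b * of_real (lattice_weight q (c * b) k)"
proof (induction k)
  case (Suc k)
  have x: "0 < q ^ k * b" "q ^ k * b \<le> b"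
    using q b by (simp_all add: power_le_one mult_left_le_one_le)
  have step: "rho \<alpha> q b (q ^ Suc k * b) = of_real (c * (q ^ k * b) / (1 - q ^ Suc k)) * rho \<alpha> q b (q ^ k * b)"
    using rho_mult_q[OF q x \<alpha>] b by (simp add: mult.assoc)
  have "of_real ((1 - q) * b * q ^ Suc k) * rho \<alpha> q b (q ^ Suc k * b)
      = of_real ((1 - q) * b * q ^ Suc k * (c * (q ^ k * b) / (1 - q ^ Suc k))) * rho \<alpha> q b (q ^ k * b)"
    unfolding step by simp
  also have "(1 - q) * b * q ^ Suc k * (c * (q ^ k * b) / (1 - q ^ Suc k))
      = (1 - q) * b * q ^ k * (c * b * q ^ Suc k / (1 - q ^ Suc k))"
    by (simp add: mult_ac)
  also have "of_real \<dots> * rho \<alpha> q b (q ^ k * b)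
      = of_real ((1 - q) * b * q ^ k) * rho \<alpha> q b (q ^ k * b) * of_real (c * b * q ^ Suc k / (1 - q ^ Suc k))"
    by (simp add: mult_ac)
  finally show ?case
    unfolding Suc.IH by (simp add: lattice_weight_Suc mult_ac)
qed simp

lemma rho_nonzero:
  assumes "0 < q" "q < 1" "0 < b"
  shows "rho \<alpha> q b b \<noteq> 0"
proof -
  have "q * q ^ k \<noteq> 1" for k
    using power_Suc_less_one[OF assms(1,2), of k] by simp
  then have "qpoch_inf q q \<noteq> 0"
    using assms by (intro qpoch_inf_nonzero) auto
  then show ?thesis
    using assms by (simp add: rho_def qgauss_def)
qed

lemma has_qint_lattice_sum:
  assumes "\<And>k. of_real ((1 - q) * b * q ^ k) * \<rho> (q ^ k * b) = C * of_real (w k)"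
    and "(\<lambda>k. w k * h (q ^ k * b)) sums S"
  shows "has_qint q (\<lambda>x. of_real (h x) * \<rho> x) b (C * of_real S)"
proof -
  have summand: "of_real ((1 - q) * b * q ^ k) * (of_real (h (q ^ k * b)) * \<rho> (q ^ k * b))
      = C * of_real (w k * h (q ^ k * b))" for k
  proof -
    have "of_real ((1 - q) * b * q ^ k) * (of_real (h (q ^ k * b)) * \<rho> (q ^ k * b))
        = (of_real ((1 - q) * b * q ^ k) * \<rho> (q ^ k * b)) * of_real (h (q ^ k * b))"
      by (simp only: mult_ac)
    then show ?thesis
      unfolding assms(1) by simp
  qed
  show ?thesis
    unfolding has_qint_def summand by (intro sums_mult sums_of_real assms(2))
qed

section \<open>Eigenpolynomials of the q-difference operator\<close>

locale q_lattice_problem =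
  fixes q a A B :: real
  assumes q_pos: "0 < q" and q_less_1: "q < 1" and a_pos: "0 < a" and AB_neg: "A * B < 0"
begin

definition eigenvalue :: "nat \<Rightarrow> real" where
  "eigenvalue n = A * (q ^ n - 1) + B * ((1 / q) ^ n - 1)"

lemma strict_mono_B_eigenvalue: "strict_mono (\<lambda>n. B * eigenvalue n)"
proof (rule strict_monoI)
  fix j k :: nat
  assume "j < k"
  then have "q ^ k < q ^ j" and "(1 / q) ^ j < (1 / q) ^ k"
    using q_pos q_less_1 by (auto intro: power_strict_decreasing power_strict_increasing)
  moreover have "B \<noteq> 0"
    using AB_neg by auto
  ultimately have "0 < (A * B) * (q ^ k - q ^ j) + B\<^sup>2 * ((1 / q) ^ k - (1 / q) ^ j)"
    using AB_neg by (intro add_pos_pos mult_neg_neg mult_pos_pos) auto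
  then show "B * eigenvalue j < B * eigenvalue k"
    by (simp add: eigenvalue_def algebra_simps power2_eq_square)
qed

lemma eigenvalue_eq_iff: "eigenvalue j = eigenvalue k \<longleftrightarrow> j = k"
  using strict_mono_eq[OF strict_mono_B_eigenvalue, of j k] AB_neg by auto

definition q_operator :: "(real \<Rightarrow> real) \<Rightarrow> real \<Rightarrow> real" where
  "q_operator f x = A * (f (q * x) - f x) + B * (x - a) / x * (f (x / q) - f x)"

text \<open>\<open>q_operator\<close> maps \<open>x^j\<close> to \<open>eigenvalue j * x^j - a B (q^-j - 1) x^(j-1)\<close>, so back substitution from
  the leading coefficient \<open>1\<close> gives the coefficients of the monic eigenpolynomial.\<close>
definition eigencoeff :: "nat \<Rightarrow> nat \<Rightarrow> real" where
  "eigencoeff n j = (if j \<le> n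
     then \<Prod>i\<in>{j..<n}. a * B * ((1 / q) ^ Suc i - 1) / (eigenvalue i - eigenvalue n) else 0)"

lemma eigencoeff_rec:
  "eigencoeff n j * (eigenvalue j - eigenvalue n) = a * B * ((1 / q) ^ Suc j - 1) * eigencoeff n (Suc j)"
proof (cases "j < n")
  case True
  then have "eigenvalue j - eigenvalue n \<noteq> 0"
    by (simp add: eigenvalue_eq_iff)
  with True show ?thesis
    by (simp add: eigencoeff_def prod.atLeast_Suc_lessThan)
qed (auto simp: eigencoeff_def)

definition eigenpoly :: "nat \<Rightarrow> real poly" where
  "eigenpoly n = Abs_poly (eigencoeff n)"

lemma coeff_eigenpoly: "coeff (eigenpoly n) = eigencoeff n"
  unfolding eigenpoly_def by (rule coeff_Abs_poly[of n]) (auto simp: eigencoeff_def)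

lemma degree_eigenpoly: "degree (eigenpoly n) = n"
  by (rule antisym) (auto simp: coeff_eigenpoly eigencoeff_def intro!: degree_le le_degree)

lemma lead_coeff_eigenpoly: "lead_coeff (eigenpoly n) = 1"
  by (simp add: degree_eigenpoly coeff_eigenpoly eigencoeff_def)

lemma eigenpoly_nonzero: "eigenpoly n \<noteq> 0"
  using lead_coeff_eigenpoly[of n] by auto

lemma poly_eigenpoly: "poly (eigenpoly n) x = (\<Sum>j\<le>n. eigencoeff n j * x ^ j)"
  by (simp add: poly_altdef degree_eigenpoly coeff_eigenpoly)

lemma q_operator_eigenpoly:
  assumes x: "x \<noteq> 0"
  shows "q_operator (poly (eigenpoly n)) x = eigenvalue n * poly (eigenpoly n) x"
proof -
  let ?p = "poly (eigenpoly n)" and ?c = "eigencoeff n"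
  define S1 where "S1 = (\<Sum>j\<le>n. ?c j * (q ^ j - 1) * x ^ j)"
  define S2 where "S2 = (\<Sum>j\<le>n. ?c j * ((1 / q) ^ j - 1) * x ^ j)"
  define D where "D j = a * B * ((1 / q) ^ j - 1) * ?c j" for j
  have "?p (q * x) - ?p x = S1"
    by (simp add: S1_def poly_eigenpoly sum_subtractf[symmetric] power_mult_distrib algebra_simps)
  moreover have "?p (x / q) - ?p x = S2"
    by (simp add: S2_def poly_eigenpoly sum_subtractf[symmetric] power_divide algebra_simps)
  ultimately have "x * (q_operator ?p x - eigenvalue n * ?p x)
      = x * (A * S1 + B * S2 - eigenvalue n * ?p x) - a * B * S2"
    unfolding q_operator_def using x by (simp add: field_simps)
  also have "A * S1 + B * S2 - eigenvalue n * ?p x = (\<Sum>j\<le>n. ?c j * (eigenvalue j - eigenvalue n) * x ^ j)"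
    unfolding S1_def S2_def poly_eigenpoly eigenvalue_def
    by (simp add: sum_distrib_left sum_subtractf[symmetric] sum.distrib[symmetric] algebra_simps)
  also have "x * \<dots> = (\<Sum>j\<le>n. D (Suc j) * x ^ Suc j)"
    unfolding sum_distrib_left
  proof (intro sum.cong refl)
    fix j
    have "x * (?c j * (eigenvalue j - eigenvalue n) * x ^ j) = ?c j * (eigenvalue j - eigenvalue n) * x ^ Suc j"
      by simp
    then show "x * (?c j * (eigenvalue j - eigenvalue n) * x ^ j) = D (Suc j) * x ^ Suc j"
      by (simp only: eigencoeff_rec D_def)
  qed
  also have "a * B * S2 = (\<Sum>j\<le>n. D j * x ^ j)"
    unfolding S2_def D_def sum_distrib_left by (simp add: mult_ac)
  also have "(\<Sum>j\<le>n. D (Suc j) * x ^ Suc j) = (\<Sum>j\<le>n. D j * x ^ j)"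
  proof -
    have "D 0 = 0" "D (Suc n) = 0"
      by (simp_all add: D_def eigencoeff_def)
    then show ?thesis
      using sum.atMost_Suc_shift[of "\<lambda>j. D j * x ^ j" n] sum.atMost_Suc[of "\<lambda>j. D j * x ^ j" n]
      by simp
  qed
  finally show ?thesis
    using x by simp
qed

lemma eigenpoly_coeff_0:
  "eigenvalue n * coeff (eigenpoly n) 0 = a * B * (1 - 1 / q) * coeff (eigenpoly n) 1"
  using eigencoeff_rec[of n 0] by (simp add: coeff_eigenpoly eigenvalue_def algebra_simps)

definition node :: "nat \<Rightarrow> real" where
  "node k = q ^ k * a"

lemma node_pos: "0 < node k"
  using q_pos a_pos by (simp add: node_def)

lemma node_0 [simp]: "node 0 = a"
  by (simp add: node_def)

lemma node_Suc: "node (Suc k) = q * node k"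
  by (simp add: node_def)

lemma lattice_eigenseq_eigenpoly:
  "lattice_eigenseq A (\<lambda>k. B * (node k - a) / node k) (eigenvalue n) (\<lambda>k. poly (eigenpoly n) (node k))"
proof -
  let ?p = "poly (eigenpoly n)"
  have eq: "eigenvalue n * ?p (node k)
      = A * (?p (node (Suc k)) - ?p (node k)) + B * (node k - a) / node k * (?p (node k / q) - ?p (node k))"
    for k
    using q_operator_eigenpoly[of "node k" n] node_pos[of k] by (simp add: q_operator_def node_Suc)
  have "node (Suc k) / q = node k" for k
    using q_pos by (simp add: node_Suc)
  then show ?thesis
    unfolding lattice_eigenseq_def using eq[of 0] eq[of "Suc _"] by simp
qed

abbreviation weight :: "nat \<Rightarrow> real" where
  "weight \<equiv> lattice_weight q (- (A / B))"

lemma weight_pos: "0 < weight k"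
proof -
  have "0 < - (A / B)"
    using AB_neg by (auto simp: divide_pos_neg divide_neg_pos zero_less_mult_iff mult_less_0_iff)
  then show ?thesis
    using q_pos q_less_1 by (rule lattice_weight_pos[rotated 2])
qed

lemma weight_pearson: "weight k * A = weight (Suc k) * (B * (node (Suc k) - a) / node (Suc k))"
proof -
  have "B \<noteq> 0" "1 - q ^ Suc k \<noteq> 0"
    using AB_neg power_Suc_less_one[OF q_pos q_less_1, of k] by auto
  then show ?thesis
    using q_pos a_pos by (simp add: lattice_weight_Suc node_def field_simps)
qed

lemma Bseq_poly_node: "Bseq (\<lambda>k. poly p (node k))"
proof -
  have "(\<lambda>k. q ^ k * a) \<longlonglongrightarrow> 0 * a"
    using q_pos q_less_1 by (intro tendsto_intros LIMSEQ_power_zero) simp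
  then have "(\<lambda>k. poly p (node k)) \<longlonglongrightarrow> poly p 0"
    unfolding node_def by (intro tendsto_poly) simp
  then show ?thesis
    by (intro convergent_imp_Bseq convergentI)
qed

definition eigen_norm :: "nat \<Rightarrow> real" where
  "eigen_norm n = (\<Sum>k. weight k * (poly (eigenpoly n) (node k))\<^sup>2)"

lemma eigenpoly_lattice_sums:
  "(\<lambda>k. weight k * (poly (eigenpoly n) (node k) * poly (eigenpoly m) (node k)))
     sums (if m = n then eigen_norm n else 0)"
proof -
  have w: "summable weight" "\<And>k. 0 \<le> weight k"
    using q_pos q_less_1 weight_pos less_imp_le by (auto intro: summable_lattice_weight)
  have "summable (\<lambda>k. weight k * (poly (eigenpoly n) (node k) * poly (eigenpoly m) (node k)))"
    by (intro summable_mult_Bseq[OF w] Bseq_mult Bseq_poly_node)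
  moreover have "(\<Sum>k. weight k * (poly (eigenpoly n) (node k) * poly (eigenpoly m) (node k))) = 0"
    if "m \<noteq> n"
    using that by (intro lattice_SL_orthogonal[OF w Bseq_poly_node Bseq_poly_node weight_pearson
          lattice_eigenseq_eigenpoly lattice_eigenseq_eigenpoly]) (simp add: eigenvalue_eq_iff)
  ultimately show ?thesis
    using summable_sums by (fastforce simp: eigen_norm_def power2_eq_square)
qed

lemma eigen_norm_pos: "0 < eigen_norm n"
proof -
  have "inj node"
    unfolding node_def inj_def using q_pos q_less_1 a_pos by (auto simp: power_inject_exp')
  then have "infinite (range node)"
    by (rule range_inj_infinite)
  then have "\<not> range node \<subseteq> {x. poly (eigenpoly n) x = 0}"
    using poly_roots_finite[OF eigenpoly_nonzero] finite_subset by blast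
  then obtain k where k: "poly (eigenpoly n) (node k) \<noteq> 0"
    by blast
  have "summable (\<lambda>k. weight k * (poly (eigenpoly n) (node k))\<^sup>2)"
    using eigenpoly_lattice_sums[of n n] by (simp add: sums_summable power2_eq_square)
  then show ?thesis
    unfolding eigen_norm_def using weight_pos k
    by (intro suminf_pos2[where i = k]) (auto intro!: mult_nonneg_nonneg less_imp_le[OF weight_pos])
qed

end

section \<open>The q-EHT\<close>

lemma qD_poly_0: "qD \<zeta> (poly p) 0 = coeff p 1"
  by (simp add: qD_def DERIV_imp_deriv[OF poly_DERIV] poly_0_coeff_0 coeff_pderiv)

lemma qEHT_operator_eq:
  fixes f :: "real \<Rightarrow> real"
  assumes q: "0 < q" "q \<noteq> 1" and x: "x \<noteq> 0"
  shows "s * x * (x - a) * qD (1 / q) (qD q f) x + (t1 * x + q * s * a / (q - 1)) * qD q f x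
       = (q * s + (q - 1) * t1) / (1 - q)\<^sup>2 * (f (q * x) - f x)
         + q\<^sup>2 * s / (1 - q)\<^sup>2 * (x - a) / x * (f (x / q) - f x)"
proof -
  define k where "k = 1 - q"
  have k: "k \<noteq> 0" "1 - q = k" "q - 1 = - k" "1 - 1 / q = - k / q"
    using q by (auto simp: k_def field_simps)
  have D: "qD q f x = (f x - f (q * x)) / (k * x)"
    and D_div: "qD q f (x / q) = (f (x / q) - f x) / (k * (x / q))"
    using q x by (simp_all add: qD_def k)
  have DD: "qD (1 / q) (qD q f) x = (qD q f x - qD q f (x / q)) / (- k / q * x)"
    using x by (simp add: qD_def k)
  show ?thesis
    unfolding DD D D_div k(2,3) using q x k(1) by (simp add: field_simps power2_eq_square)
qed

lemma qnum_eigenvalue: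
  fixes q s t1 :: real
  assumes "0 < q" "q \<noteq> 1"
  shows "qnum q (int n) * (t1 + qnum (1 / q) (int n - 1) * s)
       = (q * s + (q - 1) * t1) / (1 - q)\<^sup>2 * (q ^ n - 1) + q\<^sup>2 * s / (1 - q)\<^sup>2 * ((1 / q) ^ n - 1)"
proof (cases n)
  case (Suc m)
  define k where "k = 1 - q"
  have k: "k \<noteq> 0" "1 - q = k" "q - 1 = - k" "1 - 1 / q = - k / q"
    using assms by (auto simp: k_def field_simps)
  have qnum_n: "qnum q (int n) = (1 - q ^ n) / k"
    by (simp add: qnum_def k)
  have qnum_m: "qnum (1 / q) (int n - 1) = (1 - 1 / q ^ m) / (- k / q)"
    using Suc by (simp add: qnum_def k power_one_over)
  show ?thesis
    unfolding qnum_n qnum_m k(2,3) using Suc k(1) assms by (simp add: power_one_over field_simps power2_eq_square)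
qed (simp add: qnum_def)

locale qEHT_lattice =
  fixes q s a t1 :: real
  assumes q_pos: "0 < q" and q_less_1: "q < 1" and a_pos: "0 < a"
    and leading_sign: "s * (q * s + (q - 1) * t1) < 0" \<comment> \<open>\<open>q\<^sup>2 \<Lambda>\<^sub>q < 0\<close> multiplied by \<open>q s\<^sup>2\<close>\<close>
begin

sublocale q_lattice_problem q a "(q * s + (q - 1) * t1) / (1 - q)\<^sup>2" "q\<^sup>2 * s / (1 - q)\<^sup>2"
proof
  have "(q * s + (q - 1) * t1) / (1 - q)\<^sup>2 * (q\<^sup>2 * s / (1 - q)\<^sup>2)
      = q\<^sup>2 * (s * (q * s + (q - 1) * t1)) / (1 - q) ^ 4"
    by (simp add: field_simps power2_eq_square power4_eq_xxxx)
  also have "\<dots> < 0"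
    using q_pos q_less_1 leading_sign by (simp add: divide_neg_pos mult_pos_neg)
  finally show "(q * s + (q - 1) * t1) / (1 - q)\<^sup>2 * (q\<^sup>2 * s / (1 - q)\<^sup>2) < 0" .
qed (use q_pos q_less_1 a_pos in auto)

lemma qEHT_eigenvalue: "- qnum q (int n) * (t1 + qnum (1 / q) (int n - 1) * s) = - eigenvalue n"
  using qnum_eigenvalue[of q n t1 s] q_pos q_less_1 by (simp add: eigenvalue_def)

lemma eigenpoly_solves_qEHT:
  "s * x * (x - a) * qD (1 / q) (qD q (poly (eigenpoly n))) x
     + (t1 * x + q * s * a / (q - 1)) * qD q (poly (eigenpoly n)) x
     + (- qnum q (int n) * (t1 + qnum (1 / q) (int n - 1) * s)) * poly (eigenpoly n) x = 0"
proof (cases "x = 0")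
  case True
  define k where "k = 1 - q"
  have k: "k \<noteq> 0" "1 - q = k" "q - 1 = - k" "1 - 1 / q = - k / q"
    using q_pos q_less_1 by (auto simp: k_def field_simps)
  then have "a * (q\<^sup>2 * s / (1 - q)\<^sup>2) * (1 - 1 / q) = q * s * a / (q - 1)"
    unfolding k(2,3,4) using q_pos by (simp add: field_simps power2_eq_square)
  then have "eigenvalue n * coeff (eigenpoly n) 0 = q * s * a / (q - 1) * coeff (eigenpoly n) 1"
    using eigenpoly_coeff_0[of n] by simp
  then show ?thesis
    unfolding qEHT_eigenvalue using True by (simp add: qD_poly_0 poly_0_coeff_0)
next
  case False
  have "s * x * (x - a) * qD (1 / q) (qD q (poly (eigenpoly n))) x
      + (t1 * x + q * s * a / (q - 1)) * qD q (poly (eigenpoly n)) x = q_operator (poly (eigenpoly n)) x"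
    unfolding q_operator_def using q_pos q_less_1 False by (intro qEHT_operator_eq) auto
  then show ?thesis
    unfolding qEHT_eigenvalue q_operator_eigenpoly[OF False] by simp
qed

lemma eigenpoly_qint_orthogonal:
  assumes \<alpha>: "exp (\<alpha> * of_real (ln q)) = of_real (- (q * s + (q - 1) * t1) / (q\<^sup>2 * s * a))"
  shows "has_qint q (\<lambda>x. of_real (poly (eigenpoly n) x * poly (eigenpoly m) x) * rho \<alpha> q a x) a
           (if m = n then of_real ((1 - q) * a) * rho \<alpha> q a a * of_real (eigen_norm n) else 0)"
proof -
  have "s \<noteq> 0"
    using leading_sign by auto
  moreover have "1 - q \<noteq> 0"
    using q_less_1 by auto
  ultimately have ratio: "- (q * s + (q - 1) * t1) / (q\<^sup>2 * s * a) * a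
      = - ((q * s + (q - 1) * t1) / (1 - q)\<^sup>2 / (q\<^sup>2 * s / (1 - q)\<^sup>2))"
    using q_pos a_pos by (simp add: field_simps)
  have "has_qint q (\<lambda>x. of_real (poly (eigenpoly n) x * poly (eigenpoly m) x) * rho \<alpha> q a x) a
          (of_real ((1 - q) * a) * rho \<alpha> q a a * of_real (if m = n then eigen_norm n else 0))"
    using rho_lattice[OF q_pos q_less_1 a_pos \<alpha>] eigenpoly_lattice_sums[of n m]
    unfolding ratio node_def by (rule has_qint_lattice_sum)
  then show ?thesis
    by (cases "m = n") simp_all
qed

end

theorem theorem5p16:
  fixes q s a1 t0 t1 :: real and \<alpha> :: complex
  assumes q: "0 < q" "q < 1"
    and s: "s \<noteq> 0"
    and a1: "a1 > 0"
    and t1: "t1 \<noteq> 0"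
    and t0: "t0 / s = a1 / (1 - 1 / q)"
    and t1ne: "t1 / s \<noteq> - 1 / (1 - 1 / q)"
    and Lam: "q ^ 2 * (q powi (-2) * (1 + (1 - 1 / q) * t1 / s)) < 0"
    and alpha: "exp (\<alpha> * complex_of_real (ln q)) =
        complex_of_real (- (q powi (-2) * (q * (s + (1 - 1 / q) * t1))) / (s * a1))"
  shows "\<exists>(P :: nat \<Rightarrow> real poly) (d :: nat \<Rightarrow> complex).
     (\<forall>n. P n \<noteq> 0 \<and> degree (P n) = n \<and> d n \<noteq> 0 \<and>
        (\<forall>x. (s * x * (x - a1)) * qD (1 / q) (qD q (poly (P n))) x
              + (t1 * x + t0) * qD q (poly (P n)) x
              + (- qnum q (int n) * (t1 + qnum (1 / q) (int n - 1) * s)) * poly (P n) x = 0)) \<and>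
     (\<forall>m n. has_qint q
        (\<lambda>x. complex_of_real (poly (P n) x * poly (P m) x)
             * exp (\<alpha> * complex_of_real (ln \<bar>x\<bar>))
             * complex_of_real (exp ((log q x - 1) / 2 * ln x) * qpoch_inf (q * x / a1) q))
        a1 (if m = n then d n else 0))"
proof -
  have q_powi: "q powi (-2) = 1 / q\<^sup>2"
    by (simp add: power_int_minus field_simps)
  have "s * (q * s + (q - 1) * t1) = q * s\<^sup>2 * (1 + (1 - 1 / q) * t1 / s)"
    using q s by (simp add: field_simps power2_eq_square)
  also have "\<dots> < 0"
    using Lam q s unfolding q_powi by (simp add: mult_pos_neg)
  finally interpret qEHT_lattice q s a1 t1
    using q a1 by unfold_locales
  have t0_eq: "t0 = q * s * a1 / (q - 1)"
    using t0 s q by (simp add: field_simps)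
  have "- (1 / q\<^sup>2 * (q * (s + (1 - 1 / q) * t1))) / (s * a1) = - (q * s + (q - 1) * t1) / (q\<^sup>2 * s * a1)"
    using q s a1 by (simp add: field_simps power2_eq_square)
  then have "exp (\<alpha> * of_real (ln q)) = of_real (- (q * s + (q - 1) * t1) / (q\<^sup>2 * s * a1))"
    using alpha unfolding q_powi by simp
  note orthogonal = eigenpoly_qint_orthogonal[OF this]
  define d where "d n = of_real ((1 - q) * a1) * rho \<alpha> q a1 a1 * of_real (eigen_norm n)" for n
  show ?thesis
  proof (intro exI[of _ eigenpoly] exI[of _ d] conjI allI)
    fix n x
    show "eigenpoly n \<noteq> 0" "degree (eigenpoly n) = n"
      by (simp_all add: eigenpoly_nonzero degree_eigenpoly)
    show "d n \<noteq> 0"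
      using rho_nonzero[OF q a1] eigen_norm_pos[of n] q a1 by (simp add: d_def)
    show "s * x * (x - a1) * qD (1 / q) (qD q (poly (eigenpoly n))) x
        + (t1 * x + t0) * qD q (poly (eigenpoly n)) x
        + (- qnum q (int n) * (t1 + qnum (1 / q) (int n - 1) * s)) * poly (eigenpoly n) x = 0"
      unfolding t0_eq by (rule eigenpoly_solves_qEHT)
  next
    fix m n
    show "has_qint q (\<lambda>x. complex_of_real (poly (eigenpoly n) x * poly (eigenpoly m) x)
             * exp (\<alpha> * complex_of_real (ln \<bar>x\<bar>))
             * complex_of_real (exp ((log q x - 1) / 2 * ln x) * qpoch_inf (q * x / a1) q))
        a1 (if m = n then d n else 0)"
      using orthogonal[of n m] by (simp only: d_def rho_def qgauss_def mult.assoc)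
  qed
qed

end
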